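(* Let $\{A^i\}_{i=1}^N$ be complex $2n\times2n$ matrices. Suppose there are unitaries $W,\tilde W\in\mathrm U(2n)$ and tuples $\{B^i\}_i,\{\tilde B^i\}_i$ of complex $n\times n$ matrices such that $A^i=W(\sigma_x^{|i|}\otimes B^i)W^\dagger=\tilde W(\sigma_x^{|i|}\otimes\tilde B^i)\tilde W^\dagger$ for all $i$, and such that for each of the tuples $\{B^i\}$ and $\{\tilde B^i\}$ both the span of all products of even total parity (products $B^{i_1}\cdots B^{i_l}$ with $l\in\mathbb N$ arbitrary and $\sum_k|i_k|$ even) and the span of all products of odd total parity equal $\mathrm M_n(\mathbb C)$. Then $\tilde W(\sigma_x\otimes1_n)\tilde W^\dagger=\pm\,W(\sigma_x\otimes1_n)W^\dagger$.
   Context: $i\mapsto|i|\in\{0,1\}$ is a fixed parity function on $\{1,\dots,N\}$; $\sigma_x$ is the Pauli $x$-matrix. The matrix $u=W(\sigma_x\otimes1_n)W^\dagger$ is called the Wall matrix of the graded irreducible fMPS $\{A^i\}$ with Wall invariant $(-)$. *)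

theory Defs
  imports "HOL-Analysis.Analysis"
begin

text \<open>The 2n x 2n matrices are
indexed by bool x 'n, so that the tensor product sigma_x (x) B is the
Kronecker product with the first (2-dimensional) factor outermost.\<close>

type_synonym 'n cmat = "complex ^ 'n ^ 'n"

definition cadj :: "('n::finite) cmat \<Rightarrow> 'n cmat" where
  "cadj M = (\<chi> i j. cnj (M $ j $ i))"

definition unitary :: "('n::finite) cmat \<Rightarrow> bool" where
  "unitary U \<longleftrightarrow> cadj U ** U = mat 1 \<and> U ** cadj U = mat 1"

definition sigma_x :: "bool cmat" where
  "sigma_x = (\<chi> a b. if a \<noteq> b then 1 else 0)"

definition kron :: "('a::finite) cmat \<Rightarrow> ('b::finite) cmat \<Rightarrow> ('a \<times> 'b) cmat" where
  "kron M N = (\<chi> r c. M $ fst r $ fst c * N $ snd r $ snd c)"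

text \<open>sigma_x to the power |i| where |i| is given as a boolean parity (True = 1).\<close>
definition sigma_x_pow :: "bool \<Rightarrow> bool cmat" where
  "sigma_x_pow p = (if p then sigma_x else mat 1)"

definition cscale :: "complex \<Rightarrow> ('n::finite) cmat \<Rightarrow> 'n cmat" where
  "cscale c M = (\<chi> i j. c * M $ i $ j)"

definition cspan :: "('n::finite) cmat set \<Rightarrow> 'n cmat set" where
  "cspan S = {M. \<exists>F c. finite F \<and> F \<subseteq> S \<and> M = (\<Sum>X\<in>F. cscale (c X) X)}"

definition word_prod :: "(nat \<Rightarrow> ('n::finite) cmat) \<Rightarrow> nat list \<Rightarrow> 'n cmat" where
  "word_prod B is = foldr (\<lambda>i M. B i ** M) is (mat 1)"

definition word_parity :: "(nat \<Rightarrow> bool) \<Rightarrow> nat list \<Rightarrow> nat" where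
  "word_parity par is = sum_list (map (\<lambda>i. of_bool (par i)) is)"

definition graded_products ::
  "nat \<Rightarrow> (nat \<Rightarrow> bool) \<Rightarrow> (nat \<Rightarrow> ('n::finite) cmat) \<Rightarrow> bool \<Rightarrow> 'n cmat set" where
  "graded_products N par B od =
     {word_prod B is | is. set is \<subseteq> {1..N} \<and> odd (word_parity par is) = od}"

end

theory Submission
  imports Defs
begin

text \<open>Put \<open>Z = \<sigma>\<^sub>x \<otimes> 1\<close>, \<open>V = W\<^sup>\<dagger> W\<tilde>\<close> and \<open>u = V Z V\<^sup>\<dagger>\<close>. Every \<open>\<sigma>\<^sub>x\<^bsup>|i|\<^esup> \<otimes> B\<tilde>\<^sup>i\<close> commutes
with \<open>Z\<close>, so \<open>u\<close> commutes with every \<open>\<sigma>\<^sub>x\<^bsup>|i|\<^esup> \<otimes> B\<^sup>i = V (\<sigma>\<^sub>x\<^bsup>|i|\<^esup> \<otimes> B\<tilde>\<^sup>i) V\<^sup>\<dagger>\<close> and hence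
with all their products \<open>\<sigma>\<^sub>x\<^bsup>p\<^esup> \<otimes> B\<^sup>i\<^sup>1\<cdots>B\<^sup>i\<^sup>l\<close> of parity \<open>p\<close>. By the spanning hypotheses on
\<open>B\<close>, \<open>u\<close> commutes with \<open>1 \<otimes> X\<close> for every \<open>X\<close> and with \<open>Z = \<sigma>\<^sub>x \<otimes> 1\<close>. The commutant of
\<open>1 \<otimes> M\<^sub>n\<close> is \<open>M\<^sub>2 \<otimes> 1\<close>, so \<open>u = m \<otimes> 1\<close> with \<open>m\<close> a \<open>2 \<times> 2\<close> involution commuting with
\<open>\<sigma>\<^sub>x\<close>; as \<open>u\<close> is conjugate to \<open>Z\<close>, \<open>m \<noteq> \<plusminus>1\<close>, which forces \<open>m = \<plusminus>\<sigma>\<^sub>x\<close>, i.e. \<open>u = \<plusminus>Z\<close>.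
Conjugating by \<open>W\<close> gives the claim.\<close>

lemma matrix_add_rdistrib: "(B + C) ** A = B ** A + C ** A"
  by (vector matrix_matrix_mult_def sum.distrib[symmetric] field_simps)

lemma matrix_mul_uminus_left: "(- M :: ('n::finite) cmat) ** X = - (M ** X)"
  by (simp add: matrix_matrix_mult_def vec_eq_iff sum_negf)

lemma matrix_mul_uminus_right: "X ** (- M :: ('n::finite) cmat) = - (X ** M)"
  by (simp add: matrix_matrix_mult_def vec_eq_iff sum_negf)

lemma cscale_matrix_mul_left: "cscale c (M::('n::finite) cmat) ** X = cscale c (M ** X)"
  by (simp add: cscale_def matrix_matrix_mult_def vec_eq_iff sum_distrib_left mult_ac)

lemma cscale_matrix_mul_right: "X ** cscale c (M::('n::finite) cmat) = cscale c (X ** M)"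
  by (simp add: cscale_def matrix_matrix_mult_def vec_eq_iff sum_distrib_left mult_ac)

lemma cadj_cadj [simp]: "cadj (cadj M) = (M::('n::finite) cmat)"
  by (simp add: cadj_def vec_eq_iff)

lemma cadj_matrix_mul: "cadj (A ** B) = cadj B ** cadj (A::('n::finite) cmat)"
  by (simp add: cadj_def matrix_matrix_mult_def vec_eq_iff mult.commute)

lemma unitary_cadj: "unitary U \<Longrightarrow> unitary (cadj U)"
  by (simp add: unitary_def)

lemma unitary_matrix_mul:
  assumes "unitary U" "unitary U'"
  shows "unitary (U ** U')"
proof -
  have "cadj (U ** U') ** (U ** U') = cadj U' ** (cadj U ** U) ** U'"
    "(U ** U') ** cadj (U ** U') = U ** (U' ** cadj U') ** cadj U"
    by (simp_all add: cadj_matrix_mul matrix_mul_assoc)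
  then show ?thesis using assms by (simp add: unitary_def)
qed

lemma conj_conj: "U ** (U' ** X ** cadj U') ** cadj U = (U ** U') ** X ** cadj (U ** U')"
  by (simp add: cadj_matrix_mul matrix_mul_assoc)

lemma unitary_conj_mult:
  assumes "unitary U"
  shows "(U ** X ** cadj U) ** (U ** Y ** cadj U) = U ** (X ** Y) ** cadj U"
proof -
  have "(U ** X ** cadj U) ** (U ** Y ** cadj U) = U ** (X ** (cadj U ** U) ** Y) ** cadj U"
    by (simp add: matrix_mul_assoc)
  then show ?thesis using assms by (simp add: unitary_def)
qed

lemma unitary_conj_cancel:
  assumes "unitary U"
  shows "cadj U ** (U ** X ** cadj U) ** U = X"
proof -
  have "cadj U ** (U ** X ** cadj U) ** U = (cadj U ** U) ** X ** (cadj U ** U)"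
    by (simp add: matrix_mul_assoc)
  then show ?thesis using assms by (simp add: unitary_def)
qed

lemma unitary_conj_mat:
  assumes "unitary U"
  shows "U ** mat 1 ** cadj U = mat 1" and "U ** (- mat 1) ** cadj U = - mat 1"
  using assms by (simp_all add: unitary_def matrix_mul_uminus_left matrix_mul_uminus_right)

lemma unitary_conj_inject:
  "unitary U \<Longrightarrow> U ** X ** cadj U = U ** Y ** cadj U \<longleftrightarrow> X = Y"
  by (metis unitary_conj_cancel)

lemma unitary_conj_eq_imp:
  assumes "unitary W" "W ** X ** cadj W = W' ** Y ** cadj W'"
  shows "X = (cadj W ** W') ** Y ** cadj (cadj W ** W')"
  using unitary_conj_cancel[OF assms(1), of X] conj_conj[of "cadj W" W' Y] assms(2) by simp

lemma kron_mult:
  fixes A C :: "('a::finite) cmat" and B D :: "('b::finite) cmat"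
  shows "kron A B ** kron C D = kron (A ** C) (B ** D)"
proof -
  have "(\<Sum>k\<in>UNIV. A $ fst r $ fst k * B $ snd r $ snd k * (C $ fst k $ fst c * D $ snd k $ snd c))
     = (\<Sum>k1\<in>UNIV. A $ fst r $ k1 * C $ k1 $ fst c) * (\<Sum>k2\<in>UNIV. B $ snd r $ k2 * D $ k2 $ snd c)"
    for r c :: "'a \<times> 'b"
    unfolding sum_product UNIV_Times_UNIV[symmetric] sum.cartesian_product
    by (rule sum.cong) (auto simp: mult_ac)
  then show ?thesis by (simp add: kron_def matrix_matrix_mult_def vec_eq_iff)
qed

lemma kron_one: "kron (mat 1 :: ('a::finite) cmat) (mat 1 :: ('b::finite) cmat) = mat 1"
  by (auto simp: kron_def mat_def vec_eq_iff prod_eq_iff)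

lemma kron_uminus_left: "kron (- A) B = - kron (A::('a::finite) cmat) (B::('b::finite) cmat)"
  by (simp add: kron_def vec_eq_iff)

lemma kron_add_right: "kron P (X + Y) = kron (P::('a::finite) cmat) (X::('b::finite) cmat) + kron P Y"
  by (simp add: kron_def vec_eq_iff algebra_simps)

lemma kron_cscale_right:
  "kron P (cscale c X) = cscale c (kron (P::('a::finite) cmat) (X::('b::finite) cmat))"
  by (simp add: kron_def cscale_def vec_eq_iff mult_ac)

lemma kron_zero_right: "kron P 0 = (0 :: (('a::finite) \<times> ('b::finite)) cmat)"
  by (simp add: kron_def vec_eq_iff)

lemma kron_mat_one_right_inj:
  assumes "kron A (mat 1 :: ('b::finite) cmat) = kron B (mat 1 :: 'b cmat)"
  shows "A = (B::('a::finite) cmat)"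
proof -
  have "kron A (mat 1 :: 'b cmat) $ (p, undefined) $ (q, undefined)
      = kron B (mat 1 :: 'b cmat) $ (p, undefined) $ (q, undefined)" for p q
    using assms by simp
  then show ?thesis by (simp add: kron_def mat_def vec_eq_iff)
qed

lemma sigma_x_mult_sigma_x: "sigma_x ** sigma_x = mat 1"
  by (auto simp: sigma_x_def matrix_matrix_mult_def mat_def vec_eq_iff UNIV_bool)

lemma sigma_x_pow_mult: "sigma_x_pow p ** sigma_x_pow q = sigma_x_pow (p \<noteq> q)"
  by (auto simp: sigma_x_pow_def sigma_x_mult_sigma_x)

lemma kron_sigma_x_involution:
  "kron sigma_x (mat 1 :: ('n::finite) cmat) ** kron sigma_x (mat 1) = mat 1"
  by (simp add: kron_mult sigma_x_mult_sigma_x kron_one)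

lemma kron_sigma_x_neq_mat:
  "kron sigma_x (mat 1 :: ('n::finite) cmat) \<noteq> mat 1"
  "kron sigma_x (mat 1 :: ('n::finite) cmat) \<noteq> - mat 1"
  by (auto simp: vec_eq_iff kron_def sigma_x_def mat_def dest!: spec[of _ "(True, undefined)"])

text \<open>A \<open>2 \<times> 2\<close> matrix commuting with \<open>\<sigma>\<^sub>x\<close> has the form \<open>a 1 + b \<sigma>\<^sub>x\<close>; being an involution
means \<open>a\<^sup>2 + b\<^sup>2 = 1\<close> and \<open>ab = 0\<close>.\<close>
lemma involution_commuting_with_sigma_x:
  fixes m :: "bool cmat"
  assumes "sigma_x ** m = m ** sigma_x" "m ** m = mat 1" "m \<noteq> mat 1" "m \<noteq> - mat 1"
  shows "m = sigma_x \<or> m = - sigma_x"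
proof -
  define a where "a = m $ True $ True"
  define b where "b = m $ True $ False"
  have entry_swap: "m $ (\<not> p) $ q = m $ p $ (\<not> q)" for p q
    using arg_cong[OF assms(1), of "\<lambda>M. M $ p $ q"]
    by (cases p; cases q; simp add: matrix_matrix_mult_def sigma_x_def UNIV_bool)
  then have m_False: "m $ False $ True = b" "m $ False $ False = a"
    unfolding a_def b_def by (metis (full_types))+
  have "a * a + b * b = 1" "a * b + b * a = 0"
    using arg_cong[OF assms(2), of "\<lambda>M. M $ True $ True"]
      arg_cong[OF assms(2), of "\<lambda>M. M $ True $ False"]
    by (simp_all add: matrix_matrix_mult_def UNIV_bool mat_def a_def[symmetric] b_def[symmetric]
        m_False add.commute)
  then consider "b = 0" "a = 1 \<or> a = -1" | "a = 0" "b = 1 \<or> b = -1"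
    by (auto simp: square_eq_1_iff mult.commute)
  moreover have m_form: "m = (\<chi> p q. if p = q then a else b)"
    by (auto simp: vec_eq_iff all_bool_eq a_def b_def m_False)
  ultimately show ?thesis
  proof cases
    case 1
    then have "m = mat 1 \<or> m = - mat 1"
      using m_form by (auto simp: vec_eq_iff mat_def)
    with assms(3,4) show ?thesis by blast
  next
    case 2
    then show ?thesis
      using m_form by (auto simp: vec_eq_iff sigma_x_def)
  qed
qed

definition commute :: "('n::finite) cmat \<Rightarrow> 'n cmat \<Rightarrow> bool" where
  "commute X Y \<longleftrightarrow> X ** Y = Y ** X"

lemma commute_word_prod:
  assumes "\<forall>i\<in>set w. commute u (C i)"
  shows "commute u (word_prod C w)"
  using assms
proof (induction w)
  case Nil
  then show ?case by (simp add: commute_def word_prod_def)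
next
  case (Cons a w)
  then have "u ** C a = C a ** u" "u ** word_prod C w = word_prod C w ** u"
    by (auto simp: commute_def)
  then have "u ** (C a ** word_prod C w) = C a ** word_prod C w ** u"
    by (metis matrix_mul_assoc)
  then show ?case by (simp add: commute_def word_prod_def)
qed

lemma commute_kron_sum:
  assumes "finite F" "\<forall>X\<in>F. commute u (kron P X)"
  shows "commute u (kron (P::('a::finite) cmat) (\<Sum>X\<in>F. cscale (c X) (X::('b::finite) cmat)))"
  using assms
  by (induction F rule: finite_induct)
    (simp_all add: commute_def kron_zero_right kron_add_right kron_cscale_right
      matrix_add_rdistrib matrix_add_ldistrib cscale_matrix_mul_left cscale_matrix_mul_right)

lemma commute_kron_cspan:
  assumes "\<forall>X\<in>S. commute u (kron P X)" "M \<in> cspan S"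
  shows "commute u (kron (P::('a::finite) cmat) (M::('b::finite) cmat))"
  using assms commute_kron_sum[of _ u P] by (fastforce simp: cspan_def)

lemma commute_unitary_conj:
  "unitary U \<Longrightarrow> commute X Y \<Longrightarrow> commute (U ** X ** cadj U) (U ** Y ** cadj U)"
  by (simp add: commute_def unitary_conj_mult)

lemma commute_kron_sigma_x_sigma_x_pow:
  "commute (kron sigma_x (mat 1)) (kron (sigma_x_pow p) (X :: ('n::finite) cmat))"
  by (simp add: commute_def kron_mult sigma_x_pow_def)

subsection \<open>The commutant of \<open>1 \<otimes> M\<^sub>n\<close>\<close>

definition matrix_unit :: "'n \<Rightarrow> 'n \<Rightarrow> ('n::finite) cmat" where
  "matrix_unit k l = (\<chi> a b. if a = k \<and> b = l then 1 else 0)"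

lemma kron_one_matrix_unit_mult:
  "(kron (mat 1) (matrix_unit k l) ** u) $ (p, i) $ (q, j) = (if i = k then u $ (p, l) $ (q, j) else 0)"
proof -
  have "(kron (mat 1) (matrix_unit k l) ** u) $ (p, i) $ (q, j)
      = (\<Sum>r\<in>UNIV. if r = (p, l) then (if i = k then u $ (p, l) $ (q, j) else 0) else 0)"
    unfolding matrix_matrix_mult_def kron_def mat_def matrix_unit_def vec_lambda_beta
    by (rule sum.cong) auto
  then show ?thesis by simp
qed

lemma mult_kron_one_matrix_unit:
  "(u ** kron (mat 1) (matrix_unit k l)) $ (p, i) $ (q, j) = (if j = l then u $ (p, i) $ (q, k) else 0)"
proof -
  have "(u ** kron (mat 1) (matrix_unit k l)) $ (p, i) $ (q, j)
      = (\<Sum>r\<in>UNIV. if r = (q, k) then (if j = l then u $ (p, i) $ (q, k) else 0) else 0)"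
    unfolding matrix_matrix_mult_def kron_def mat_def matrix_unit_def vec_lambda_beta
    by (rule sum.cong) auto
  then show ?thesis by simp
qed

lemma commutant_kron_one_left:
  fixes u :: "(('a::finite) \<times> ('b::finite)) cmat"
  assumes "\<And>X. commute u (kron (mat 1) X)"
  shows "u = kron (\<chi> p q. u $ (p, k) $ (q, k)) (mat 1)"
proof -
  have unit_eq: "(if i = a then u $ (p, b) $ (q, j) else 0) = (if j = b then u $ (p, i) $ (q, a) else 0)"
    for p q i j a b
    using arg_cong[OF assms[of "matrix_unit a b", unfolded commute_def], of "\<lambda>M. M $ (p, i) $ (q, j)"]
    by (simp only: kron_one_matrix_unit_mult mult_kron_one_matrix_unit)
  have off_diagonal: "u $ (p, i) $ (q, j) = 0" if "i \<noteq> j" for p q i j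
    using that unit_eq[where p = p and q = q and i = i and j = j and a = i and b = i] by simp
  have diagonal: "u $ (p, i) $ (q, i) = u $ (p, k) $ (q, k)" for p q i
    using unit_eq[where p = p and q = q and i = i and j = k and a = i and b = k] by simp
  define m where "m = (\<chi> p q. u $ (p, k) $ (q, k))"
  have "u $ (p, i) $ (q, j) = kron m (mat 1) $ (p, i) $ (q, j)" for p q i j
    using off_diagonal[where p = p and q = q and i = i and j = j] diagonal[where p = p and q = q and i = i]
    by (cases "i = j") (simp_all add: kron_def mat_def m_def)
  then have "u = kron m (mat 1)"
    by (simp add: vec_eq_iff)
  then show ?thesis
    by (simp only: m_def)
qed

lemma word_prod_kron_sigma_x_pow:
  "word_prod (\<lambda>i. kron (sigma_x_pow (par i)) (B i)) w
   = kron (sigma_x_pow (odd (word_parity par w))) (word_prod (B :: nat \<Rightarrow> ('n::finite) cmat) w)"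
proof (induction w)
  case Nil
  then show ?case by (simp add: word_prod_def word_parity_def sigma_x_pow_def kron_one)
next
  case (Cons a w)
  have "odd (word_parity par (a # w)) = (par a \<noteq> odd (word_parity par w))"
    by (simp add: word_parity_def)
  with Cons show ?case
    by (simp add: word_prod_def kron_mult sigma_x_pow_mult)
qed

lemma commute_graded_products:
  assumes "\<forall>i\<in>{1..N}. commute u (kron (sigma_x_pow (par i)) (B i))"
    and "X \<in> graded_products N par B od"
  shows "commute u (kron (sigma_x_pow od) X)"
proof -
  obtain w where "X = word_prod B w" "set w \<subseteq> {1..N}" "odd (word_parity par w) = od"
    using assms(2) by (auto simp: graded_products_def)
  then show ?thesis
    using commute_word_prod[of w u "\<lambda>i. kron (sigma_x_pow (par i)) (B i)"] assms(1)
    by (auto simp: word_prod_kron_sigma_x_pow)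
qed

text \<open>The even products give the commutation with \<open>1 \<otimes> M\<^sub>n\<close>, the odd ones the commutation
with \<open>\<sigma>\<^sub>x \<otimes> 1\<close>.\<close>
lemma graded_commutant_involution:
  fixes u :: "(bool \<times> ('n::finite)) cmat"
  assumes "\<forall>i\<in>{1..N}. commute u (kron (sigma_x_pow (par i)) (B i))"
    and "cspan (graded_products N par B False) = UNIV"
    and "cspan (graded_products N par B True) = UNIV"
    and "u ** u = mat 1" "u \<noteq> mat 1" "u \<noteq> - mat 1"
  shows "u = kron sigma_x (mat 1) \<or> u = - kron sigma_x (mat 1)"
proof -
  have "commute u (kron (mat 1) X)" for X
  proof (rule commute_kron_cspan)
    show "\<forall>Y\<in>graded_products N par B False. commute u (kron (mat 1) Y)"
      using commute_graded_products[OF assms(1), of _ False] by (simp add: sigma_x_pow_def)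
  qed (simp add: assms(2))
  then obtain m :: "bool cmat" where u_eq: "u = kron m (mat 1)"
    using commutant_kron_one_left by blast
  have "commute u (kron sigma_x (mat 1))"
  proof (rule commute_kron_cspan)
    show "\<forall>Y\<in>graded_products N par B True. commute u (kron sigma_x Y)"
      using commute_graded_products[OF assms(1), of _ True] by (simp add: sigma_x_pow_def)
  qed (simp add: assms(3))
  then have "kron (sigma_x ** m) (mat 1 :: 'n cmat) = kron (m ** sigma_x) (mat 1)"
    by (simp add: commute_def u_eq kron_mult)
  then have "sigma_x ** m = m ** sigma_x"
    by (rule kron_mat_one_right_inj)
  moreover have "m ** m = mat 1"
    using assms(4) by (auto simp: u_eq kron_mult kron_one[symmetric] intro: kron_mat_one_right_inj)
  moreover have "m \<noteq> mat 1" "m \<noteq> - mat 1"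
    using assms(5,6) by (auto simp: u_eq kron_one kron_uminus_left)
  ultimately have "m = sigma_x \<or> m = - sigma_x"
    by (rule involution_commuting_with_sigma_x)
  then show ?thesis
    by (auto simp: u_eq kron_uminus_left)
qed

theorem mainTheorem8:
  fixes N :: nat
    and par :: "nat \<Rightarrow> bool"
    and A :: "nat \<Rightarrow> (bool \<times> 'n::finite) cmat"
    and W Wt :: "(bool \<times> 'n) cmat"
    and B Bt :: "nat \<Rightarrow> 'n cmat"
  assumes "unitary W" and "unitary Wt"
    and "\<forall>i\<in>{1..N}. A i = W ** kron (sigma_x_pow (par i)) (B i) ** cadj W"
    and "\<forall>i\<in>{1..N}. A i = Wt ** kron (sigma_x_pow (par i)) (Bt i) ** cadj Wt"
    and "cspan (graded_products N par B False) = UNIV"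
    and "cspan (graded_products N par B True) = UNIV"
    and "cspan (graded_products N par Bt False) = UNIV"
    and "cspan (graded_products N par Bt True) = UNIV"
  shows "Wt ** kron sigma_x (mat 1) ** cadj Wt = W ** kron sigma_x (mat 1) ** cadj W
       \<or> Wt ** kron sigma_x (mat 1) ** cadj Wt = - (W ** kron sigma_x (mat 1) ** cadj W)"
proof -
  define Z where "Z = kron sigma_x (mat 1 :: 'n cmat)"
  define V where "V = cadj W ** Wt"
  define u where "u = V ** Z ** cadj V"
  have V: "unitary V"
    using assms(1,2) by (simp add: V_def unitary_matrix_mul unitary_cadj)
  have "\<forall>i\<in>{1..N}. commute u (kron (sigma_x_pow (par i)) (B i))"
  proof
    fix i assume "i \<in> {1..N}"
    then have "kron (sigma_x_pow (par i)) (B i) = V ** kron (sigma_x_pow (par i)) (Bt i) ** cadj V"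
      using assms(3,4) unitary_conj_eq_imp[OF assms(1)] by (simp add: V_def)
    then show "commute u (kron (sigma_x_pow (par i)) (B i))"
      using commute_unitary_conj[OF V commute_kron_sigma_x_sigma_x_pow] by (simp add: u_def Z_def)
  qed
  moreover have "u ** u = mat 1"
    using unitary_conj_mult[OF V, of Z Z] unitary_conj_mat(1)[OF V]
    by (simp add: u_def Z_def kron_sigma_x_involution)
  moreover have "u \<noteq> mat 1" "u \<noteq> - mat 1"
    using kron_sigma_x_neq_mat unitary_conj_inject[OF V, of Z] unitary_conj_mat[OF V]
    unfolding u_def Z_def by metis+
  ultimately have "u = Z \<or> u = - Z"
    unfolding Z_def by (rule graded_commutant_involution[OF _ assms(5,6)])
  moreover have "W ** u ** cadj W = Wt ** Z ** cadj Wt"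
    using conj_conj[of W V Z] assms(1) by (simp add: u_def V_def unitary_def matrix_mul_assoc)
  ultimately show ?thesis
    unfolding Z_def by (metis matrix_mul_uminus_left matrix_mul_uminus_right)
qed

end
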